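(* Let $A_0,\ldots,A_m\in\mathbb{R}^{n\times n}$, $\tau_0=0$, $\tau_1,\ldots,\tau_m>0$, weights $w_0,\ldots,w_m\in(0,\infty]$ with at least one finite ($1/\infty:=0$), $\epsilon>0$, and $\sigma\in\mathbb{R}$. Put $w(\sigma)=\sum_{i=0}^m e^{-\sigma\tau_i}/w_i$, $A_{\sigma,0}=A_0-\sigma I_n$, $A_{\sigma,i}=A_ie^{-\tau_i\sigma}$ ($1\le i\le m$), and for $\xi>0$ let $$H(\lambda,\sigma,\xi)=\lambda I_{2n}-\begin{pmatrix}A_{\sigma,0}&\xi^{-2}I_n\\-I_n&-A_{\sigma,0}^*\end{pmatrix}-\sum_{i=1}^m\left(\begin{pmatrix}A_{\sigma,i}&0\\0&0\end{pmatrix}e^{-\lambda\tau_i}+\begin{pmatrix}0&0\\0&-A_{\sigma,i}^*\end{pmatrix}e^{\lambda\tau_i}\right).$$ Define $h_\sigma(\lambda)=\det H\big(\lambda,\sigma,\frac{1}{\epsilon w(\sigma)}\big)$. Then for every $\omega\ge 0$, $\Im\, h_\sigma(j\omega)=0$ and $\Re\, h_\sigma'(j\omega)=0$.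
   Context: $h_\sigma'$ denotes the derivative of the entire function $\lambda\mapsto h_\sigma(\lambda)$. *)

theory Defs
  imports "HOL-Analysis.Analysis" "HOL-Library.Extended_Real"
begin

text \<open>Real n x n matrices are real^'n^'n; the 2n x 2n matrices are indexed by 'n + 'n.\<close>

definition cmat :: "real^'n^'n \<Rightarrow> complex^'n^'n" where
  "cmat A = (\<chi> i j. complex_of_real (A$i$j))"

definition ctrans :: "complex^'n^'n \<Rightarrow> complex^'n^'n" where
  "ctrans M = (\<chi> i j. cnj (M$j$i))"

definition cscale :: "complex \<Rightarrow> complex^'m^'n \<Rightarrow> complex^'m^'n" where
  "cscale c M = (\<chi> i j. c * M$i$j)"

definition block :: "'a^'n^'n \<Rightarrow> 'a^'n^'n \<Rightarrow> 'a^'n^'n \<Rightarrow> 'a^'n^'n \<Rightarrow> 'a^('n+'n)^('n+'n)" where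
  "block P Q R S = (\<chi> i j. case i of
       Inl a \<Rightarrow> (case j of Inl b \<Rightarrow> P$a$b | Inr b \<Rightarrow> Q$a$b)
     | Inr a \<Rightarrow> (case j of Inl b \<Rightarrow> R$a$b | Inr b \<Rightarrow> S$a$b))"

definition inv_weight :: "ereal \<Rightarrow> real" where
  "inv_weight x = (if x = \<infinity> then 0 else 1 / real_of_ereal x)"

definition wsig :: "nat \<Rightarrow> (nat \<Rightarrow> real) \<Rightarrow> (nat \<Rightarrow> ereal) \<Rightarrow> real \<Rightarrow> real" where
  "wsig m \<tau> w \<sigma> = (\<Sum>i\<le>m. exp (- \<sigma> * \<tau> i) * inv_weight (w i))"

definition Asig :: "(nat \<Rightarrow> real^'n^'n) \<Rightarrow> (nat \<Rightarrow> real) \<Rightarrow> real \<Rightarrow> nat \<Rightarrow> real^'n^'n" where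
  "Asig A \<tau> \<sigma> i = (if i = 0 then A 0 - \<sigma> *\<^sub>R mat 1 else exp (- \<tau> i * \<sigma>) *\<^sub>R A i)"

definition Hmat :: "nat \<Rightarrow> (nat \<Rightarrow> real^'n^'n) \<Rightarrow> (nat \<Rightarrow> real) \<Rightarrow> real \<Rightarrow> real \<Rightarrow> complex
    \<Rightarrow> complex^('n+'n)^('n+'n)" where
  "Hmat m A \<tau> \<sigma> \<xi> z =
     cscale z (mat 1)
     - block (cmat (Asig A \<tau> \<sigma> 0)) (cscale (complex_of_real (inverse (\<xi>^2))) (mat 1))
             (- mat 1) (- ctrans (cmat (Asig A \<tau> \<sigma> 0)))
     - (\<Sum>i\<in>{1..m}.
          cscale (exp (- z * complex_of_real (\<tau> i))) (block (cmat (Asig A \<tau> \<sigma> i)) 0 0 0)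
        + cscale (exp (z * complex_of_real (\<tau> i))) (block 0 0 0 (- ctrans (cmat (Asig A \<tau> \<sigma> i)))))"

definition hsig :: "nat \<Rightarrow> (nat \<Rightarrow> real^'n^'n) \<Rightarrow> (nat \<Rightarrow> real) \<Rightarrow> (nat \<Rightarrow> ereal) \<Rightarrow> real \<Rightarrow> real
    \<Rightarrow> complex \<Rightarrow> complex" where
  "hsig m A \<tau> w \<epsilon> \<sigma> z = det (Hmat m A \<tau> \<sigma> (1 / (\<epsilon> * wsig m \<tau> w \<sigma>)) z)"

end

theory Submission
  imports Defs "HOL-Library.Cardinality"
begin

text \<open>
  The matrix \<open>H(\<lambda>)\<close> is Hamiltonian in the delay sense: \<open>H(-\<lambda>)\<^sup>T = J H(\<lambda>) J\<close> with
  \<open>J = (0 I; -I 0)\<close>, and its entries have real coefficients. Taking determinants, \<open>h\<^sub>\<sigma>\<close>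
  is an even entire function with \<open>h\<^sub>\<sigma>(conj \<lambda>) = conj (h\<^sub>\<sigma>(\<lambda>))\<close>. On the imaginary axis
  \<open>conj \<lambda> = -\<lambda>\<close>, so \<open>h\<^sub>\<sigma>(j\<omega>)\<close> is real; the derivative is odd and satisfies the same
  reflection law, so \<open>h\<^sub>\<sigma>'(j\<omega>)\<close> is purely imaginary.
\<close>

lemma deriv_even_function:
  fixes f :: "'a::real_normed_field \<Rightarrow> 'a"
  assumes "f field_differentiable at (-z)" and "\<And>z. f (-z) = f z"
  shows "deriv f z = - deriv f (-z)"
proof -
  have "((f \<circ> uminus) has_field_derivative deriv f (-z) * -1) (at z)"
    using assms(1) by (intro DERIV_chain derivative_intros) (simp add: field_differentiable_derivI)
  moreover have "f \<circ> uminus = f"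
    using assms(2) by (simp add: fun_eq_iff)
  ultimately show ?thesis
    using DERIV_imp_deriv by fastforce
qed

lemma deriv_cnj_symmetric_function:
  fixes f :: "complex \<Rightarrow> complex"
  assumes "f field_differentiable at (cnj z)" and "\<And>z. f (cnj z) = cnj (f z)"
  shows "deriv f z = cnj (deriv f (cnj z))"
proof -
  have "((cnj \<circ> f \<circ> cnj) has_field_derivative cnj (deriv f (cnj z))) (at z)"
    using assms(1) by (intro has_field_derivative_cnj_cnj) (simp add: field_differentiable_derivI)
  moreover have "cnj \<circ> f \<circ> cnj = f"
    using assms(2) by (simp add: fun_eq_iff)
  ultimately show ?thesis
    using DERIV_imp_deriv by fastforce
qed

lemma even_cnj_symmetric_on_imaginary_axis:
  fixes f :: "complex \<Rightarrow> complex"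
  assumes "f holomorphic_on UNIV" and even: "\<And>z. f (-z) = f z"
    and reflect: "\<And>z. f (cnj z) = cnj (f z)" and "Re z = 0"
  shows "Im (f z) = 0 \<and> Re (deriv f z) = 0"
proof
  have cnj_z: "cnj z = - z"
    using \<open>Re z = 0\<close> by (simp add: complex_eq_iff)
  have "cnj (f z) = f z"
    using reflect[of z] even[of z] cnj_z by simp
  then show "Im (f z) = 0"
    by (simp add: complex_eq_iff)
  have differentiable: "\<And>u. f field_differentiable at u"
    using assms(1) by (simp add: holomorphic_on_def field_differentiable_at_within)
  have "cnj (deriv f z) = - deriv f z"
    using deriv_even_function[OF differentiable even, of "-z"]
      deriv_cnj_symmetric_function[OF differentiable reflect, of z] cnj_z
    by simp
  then show "Re (deriv f z) = 0"
    by (simp add: complex_eq_iff)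
qed

lemma det_scale_rows_columns:
  fixes M :: "'a::comm_ring_1^'n^'n"
  shows "det (\<chi> i j. d i * d j * M $ i $ j) = (prod d UNIV)\<^sup>2 * det M"
proof -
  have "(\<chi> i j. d i * d j * M $ i $ j) = (\<chi> i. d i *s (\<chi> j. d j * M $ i $ j))"
    by (simp add: vec_eq_iff mult.assoc)
  then have "det (\<chi> i j. d i * d j * M $ i $ j) = prod d UNIV * det (\<chi> i j. d j * M $ i $ j)"
    using det_rows_mul[of d "\<lambda>i. \<chi> j. d j * M $ i $ j"] by simp
  also have "det (\<chi> i j. d j * M $ i $ j) = det (transpose (\<chi> i j. d j * M $ i $ j))"
    by simp
  also have "transpose (\<chi> i j. d j * M $ i $ j) = (\<chi> i. d i *s transpose M $ i)"
    by (simp add: vec_eq_iff transpose_def)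
  also have "det \<dots> = prod d UNIV * det M"
    using det_rows_mul[of d "\<lambda>i. transpose M $ i"] by simp
  finally show ?thesis
    by (simp add: power2_eq_square mult.assoc)
qed

lemma det_permute_rows_columns:
  fixes M :: "'a::comm_ring_1^'n^'n"
  assumes "p permutes UNIV"
  shows "det (\<chi> i j. M $ p i $ p j) = det M"
proof -
  have "det (\<chi> i j. M $ p i $ p j) = of_int (sign p) * det (\<chi> i j. M $ i $ p j)"
    using det_permute_rows[OF assms, of "\<chi> i j. M $ i $ p j"] by simp
  also have "det (\<chi> i j. M $ i $ p j) = of_int (sign p) * det M"
    using det_permute_columns[OF assms, of M] by simp
  moreover have "of_int (sign p) * of_int (sign p) = (1::'a)"
    by (simp flip: of_int_mult add: sign_idempotent)
  ultimately show ?thesis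
    by (metis mult.assoc mult_1)
qed

lemma det_uminus:
  fixes M :: "'a::comm_ring_1^'n^'n"
  shows "det (- M) = (-1) ^ CARD('n) * det M"
proof -
  have "- M = (\<chi> i. (-1) *s M $ i)"
    by (simp add: vec_eq_iff)
  then show ?thesis
    using det_rows_mul[of "\<lambda>_. -1" "\<lambda>i. M $ i"] by simp
qed

lemma det_cnj: "det (\<chi> i j. cnj (M $ i $ j)) = cnj (det (M::complex^'n^'n))"
  by (simp add: det_def)

definition charmat :: "nat \<Rightarrow> (nat \<Rightarrow> real^'n^'n) \<Rightarrow> (nat \<Rightarrow> real) \<Rightarrow> real \<Rightarrow> complex \<Rightarrow> complex^'n^'n"
  where "charmat m A \<tau> \<sigma> z = (\<chi> a b. (if a = b then z else 0) - complex_of_real (Asig A \<tau> \<sigma> 0 $ a $ b)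
     - (\<Sum>k\<in>{1..m}. exp (- z * complex_of_real (\<tau> k)) * complex_of_real (Asig A \<tau> \<sigma> k $ a $ b)))"

lemma Hmat_eq_block:
  "Hmat m A \<tau> \<sigma> \<xi> z = block (charmat m A \<tau> \<sigma> z)
     (\<chi> a b. if a = b then - complex_of_real (inverse (\<xi>\<^sup>2)) else 0) (mat 1)
     (- transpose (charmat m A \<tau> \<sigma> (- z)))"
  unfolding vec_eq_iff
proof (intro allI)
  fix i j
  show "Hmat m A \<tau> \<sigma> \<xi> z $ i $ j = block (charmat m A \<tau> \<sigma> z)
     (\<chi> a b. if a = b then - complex_of_real (inverse (\<xi>\<^sup>2)) else 0) (mat 1)
     (- transpose (charmat m A \<tau> \<sigma> (- z))) $ i $ j"
    by (cases i; cases j)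
      (auto simp: Hmat_def block_def charmat_def cscale_def cmat_def ctrans_def mat_def transpose_def sum_negf)
qed

definition swap_blocks :: "'n + 'n \<Rightarrow> 'n + 'n"
  where "swap_blocks = case_sum Inr Inl"

definition block_sign :: "'n + 'n \<Rightarrow> complex"
  where "block_sign = case_sum (\<lambda>_. 1) (\<lambda>_. -1)"

lemma swap_blocks_permutes: "swap_blocks permutes UNIV"
proof (rule bij_imp_permutes)
  show "bij_betw swap_blocks UNIV UNIV"
    by (rule bij_betwI[where g = swap_blocks]) (auto simp: swap_blocks_def split: sum.split)
qed auto

lemma prod_block_sign_squared: "(\<Prod>i\<in>UNIV. block_sign i)\<^sup>2 = 1"
  unfolding prod_power_distrib by (rule prod.neutral) (simp add: block_sign_def split: sum.split)

text \<open>Entrywise form of \<open>H(-\<lambda>)\<^sup>T = J H(\<lambda>) J\<close> with \<open>J = (0 I; -I 0)\<close>.\<close>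

lemma transpose_Hmat_uminus:
  "transpose (Hmat m A \<tau> \<sigma> \<xi> (- z)) =
     - (\<chi> i j. block_sign i * block_sign j * Hmat m A \<tau> \<sigma> \<xi> z $ swap_blocks i $ swap_blocks j)"
  unfolding vec_eq_iff
proof (intro allI)
  fix i j
  show "transpose (Hmat m A \<tau> \<sigma> \<xi> (- z)) $ i $ j =
     (- (\<chi> i j. block_sign i * block_sign j * Hmat m A \<tau> \<sigma> \<xi> z $ swap_blocks i $ swap_blocks j)) $ i $ j"
    by (cases i; cases j)
      (auto simp: Hmat_eq_block block_def swap_blocks_def block_sign_def transpose_def mat_def)
qed

lemma Hmat_cnj: "Hmat m A \<tau> \<sigma> \<xi> (cnj z) = (\<chi> i j. cnj (Hmat m A \<tau> \<sigma> \<xi> z $ i $ j))"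
  unfolding vec_eq_iff
proof (intro allI)
  fix i j
  show "Hmat m A \<tau> \<sigma> \<xi> (cnj z) $ i $ j = (\<chi> i j. cnj (Hmat m A \<tau> \<sigma> \<xi> z $ i $ j)) $ i $ j"
    by (cases i; cases j) (auto simp: Hmat_eq_block block_def charmat_def transpose_def mat_def exp_cnj)
qed

lemma Hmat_entry_holomorphic: "(\<lambda>z. Hmat m A \<tau> \<sigma> \<xi> z $ i $ j) holomorphic_on UNIV"
  by (cases i; cases j; cases "projl i = projl j"; cases "projr i = projr j")
    (auto simp: Hmat_eq_block block_def charmat_def mat_def transpose_def intro!: holomorphic_intros)

lemma det_Hmat_uminus: "det (Hmat m A \<tau> \<sigma> \<xi> (- z)) = det (Hmat m A \<tau> \<sigma> \<xi> z)"
proof -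
  let ?H = "Hmat m A \<tau> \<sigma> \<xi> z"
  have "det (Hmat m A \<tau> \<sigma> \<xi> (- z)) = det (transpose (Hmat m A \<tau> \<sigma> \<xi> (- z)))"
    by simp
  also have "\<dots> = det (\<chi> i j. block_sign i * block_sign j * (\<chi> i j. ?H $ swap_blocks i $ swap_blocks j) $ i $ j)"
    by (simp add: transpose_Hmat_uminus det_uminus power_add)
  also have "\<dots> = det (\<chi> i j. ?H $ swap_blocks i $ swap_blocks j)"
    by (simp only: det_scale_rows_columns prod_block_sign_squared mult_1)
  also have "\<dots> = det ?H"
    by (rule det_permute_rows_columns[OF swap_blocks_permutes])
  finally show ?thesis .
qed

lemma hsig_uminus: "hsig m A \<tau> w \<epsilon> \<sigma> (- z) = hsig m A \<tau> w \<epsilon> \<sigma> z"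
  by (simp add: hsig_def det_Hmat_uminus)

lemma hsig_cnj: "hsig m A \<tau> w \<epsilon> \<sigma> (cnj z) = cnj (hsig m A \<tau> w \<epsilon> \<sigma> z)"
  by (simp add: hsig_def Hmat_cnj det_cnj)

lemma hsig_holomorphic: "hsig m A \<tau> w \<epsilon> \<sigma> holomorphic_on UNIV"
  unfolding hsig_def det_def by (intro holomorphic_intros Hmat_entry_holomorphic)

theorem proposition2:
  fixes m :: nat and A :: "nat \<Rightarrow> real^'n^'n" and \<tau> :: "nat \<Rightarrow> real"
    and w :: "nat \<Rightarrow> ereal" and \<epsilon> \<sigma> \<omega> :: real
  assumes "\<tau> 0 = 0"
    and "\<forall>i\<in>{1..m}. \<tau> i > 0"
    and "\<forall>i\<le>m. 0 < w i"
    and "\<exists>i\<le>m. w i \<noteq> \<infinity>"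
    and "\<epsilon> > 0"
    and "\<omega> \<ge> 0"
  shows "Im (hsig m A \<tau> w \<epsilon> \<sigma> (\<i> * complex_of_real \<omega>)) = 0
       \<and> Re (deriv (hsig m A \<tau> w \<epsilon> \<sigma>) (\<i> * complex_of_real \<omega>)) = 0"
  by (rule even_cnj_symmetric_on_imaginary_axis[OF hsig_holomorphic hsig_uminus hsig_cnj]) simp

end
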